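(* Let $X$ be a Polish space, let $\mathcal{U}\subseteq K(X)$ be open, dense and hereditary, and let $\varepsilon>0$. Then the set \[ G_{\mathcal{U},\varepsilon}=\{\mu\in P(X): \exists K\in\mathcal{U} \text{ with } \mu(K)\geq 1-\varepsilon\} \] is co-meager in $P(X)$.
   Context: $K(X)$ denotes the hyperspace of all compact subsets of $X$ with the Vietoris topology; $P(X)$ denotes the space of Borel probability measures on $X$ with the weak* topology. A subset $\mathcal{U}\subseteq K(X)$ is hereditary if whenever $K\in\mathcal{U}$ and $C\in K(X)$ with $C\subseteq K$, then $C\in\mathcal{U}$. *)

theory Defs
  imports "HOL-Analysis.Analysis" "HOL-Probability.Probability"
begin

text \<open>K(X): the compact subsets of X (including the empty set).\<close>
definition compacts :: "'a::topological_space set set" where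
  "compacts = {K. compact K}"

definition vietoris :: "'a::topological_space set topology" where
  "vietoris = topology_generated_by
     ({{K \<in> compacts. K \<subseteq> U} | U. open U} \<union> {{K \<in> compacts. K \<inter> U \<noteq> {}} | U. open U})"

definition prob_measures :: "'a::topological_space measure set" where
  "prob_measures = {M. prob_space M \<and> sets M = sets borel}"

definition weak_topology :: "'a::topological_space measure topology" where
  "weak_topology = topology_generated_by
     {{M \<in> prob_measures. (\<integral>x. f x \<partial>M) \<in> V} | f V.
        continuous_on UNIV (f :: 'a \<Rightarrow> real) \<and> bounded (range f) \<and> open V}"

definition nowhere_dense_in :: "'a topology \<Rightarrow> 'a set \<Rightarrow> bool" where
  "nowhere_dense_in T S \<longleftrightarrow> S \<subseteq> topspace T \<and> T interior_of (T closure_of S) = {}"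

definition meager_in :: "'a topology \<Rightarrow> 'a set \<Rightarrow> bool" where
  "meager_in T S \<longleftrightarrow> (\<exists>F. countable F \<and> (\<forall>N\<in>F. nowhere_dense_in T N) \<and> S \<subseteq> \<Union>F)"

definition comeager_in :: "'a topology \<Rightarrow> 'a set \<Rightarrow> bool" where
  "comeager_in T S \<longleftrightarrow> S \<subseteq> topspace T \<and> meager_in T (topspace T - S)"

definition hereditary_compacts :: "'a::topological_space set set \<Rightarrow> bool" where
  "hereditary_compacts \<U> \<longleftrightarrow> (\<forall>K\<in>\<U>. \<forall>C\<in>compacts. C \<subseteq> K \<longrightarrow> C \<in> \<U>)"

end

theory Submission
  imports Defs
begin

text \<open>
  Since \<U> is open and hereditary, every K \<in> \<U> has an open neighbourhood V all of whose compact
  subsets lie in \<U>; a bump function between K and V then shows that every measure giving K mass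
  more than 1 - \<epsilon> lies in the weak interior of G = {\<mu>. \<exists>K\<in>\<U>. \<mu>(K) \<ge> 1 - \<epsilon>}.
  Such measures are weakly dense: given \<mu> and finitely many bounded continuous test functions,
  choose a compact set K carrying almost all of \<mu>, cover it by finitely many balls on which the
  test functions oscillate little, use density of \<U> to find a member of \<U> meeting every ball inside
  their union, and push \<mu> forward by a measurable map sending each ball to a chosen point of that
  member.  So G contains a dense open set, and is therefore co-meager.
\<close>

lemma generate_topology_on_finite_Inter_nbhd:
  assumes "generate_topology_on S W" "x \<in> W"
  obtains \<F> where "finite \<F>" "\<F> \<subseteq> S" "x \<in> \<Inter>\<F>" "\<Inter>\<F> \<subseteq> W"
proof -
  obtain \<W> where \<W>: "\<W> \<subseteq> Collect (finite' intersection_of (\<lambda>A. A \<in> S))" "\<Union>\<W> = W"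
    using assms(1) unfolding generate_topology_on_eq union_of_def by blast
  then obtain A where "A \<in> \<W>" "x \<in> A" using assms(2) by blast
  then have "(finite' intersection_of (\<lambda>A. A \<in> S)) A" using \<W>(1) by blast
  then obtain \<F> where "finite \<F>" "\<F> \<subseteq> S" "\<Inter>\<F> = A"
    by (auto simp: intersection_of_def)
  with that \<open>x \<in> A\<close> \<open>A \<in> \<W>\<close> \<W>(2) show ?thesis by blast
qed

lemma comeager_in_if_interior_dense:
  assumes "S \<subseteq> topspace X" "X closure_of (X interior_of S) = topspace X"
  shows "comeager_in X S"
proof -
  define N where "N = topspace X - X interior_of S"
  have "X closure_of N = N"
    unfolding N_def by (simp add: closure_of_eq closedin_diff)
  moreover have "X interior_of N = {}"
    using assms(2) unfolding N_def closure_of_eq_topspace .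
  ultimately have "nowhere_dense_in X N"
    unfolding nowhere_dense_in_def N_def by simp
  moreover have "topspace X - S \<subseteq> N"
    unfolding N_def using interior_of_subset[of X S] by blast
  ultimately show ?thesis
    unfolding comeager_in_def meager_in_def using assms(1)
    by (intro conjI exI[of _ "{N}"]) simp_all
qed

lemma continuous_bump_between:
  fixes C V :: "'a::metric_space set"
  assumes "closed C" "open V" "C \<subseteq> V"
  obtains h :: "'a \<Rightarrow> real" where "continuous_on UNIV h" "\<And>x. 0 \<le> h x" "\<And>x. h x \<le> 1"
    "\<And>x. x \<in> C \<Longrightarrow> h x = 1" "\<And>x. x \<notin> V \<Longrightarrow> h x = 0"
proof -
  have "normal_space (euclidean :: 'a topology)"
    by (rule metrizable_imp_normal_space[OF metrizable_space_euclidean])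
  moreover have "disjnt (- V) C" using assms(3) by (auto simp: disjnt_def)
  ultimately obtain h where "continuous_map euclidean (top_of_set {0..1::real}) h"
      "h ` (- V) \<subseteq> {0}" "h ` C \<subseteq> {1}"
    using Urysohn_lemma[of euclidean "- V" C 0 1] assms(1,2) by (auto simp: closed_Compl)
  then have "continuous_on UNIV h" "\<forall>x. h x \<in> {0..1}" "\<forall>x\<in>-V. h x = 0" "\<forall>x\<in>C. h x = 1"
    by (auto simp: continuous_map_in_subtopology continuous_map_iff_continuous2 image_subset_iff Pi_iff)
  with that show ?thesis by auto
qed

lemma finite_open_common_ball:
  fixes p :: "'i \<Rightarrow> 'a::metric_space"
  assumes "finite I" "\<And>i. i \<in> I \<Longrightarrow> open (V i)" "\<And>i. i \<in> I \<Longrightarrow> p i \<in> V i"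
  obtains e where "e > 0" "\<And>i. i \<in> I \<Longrightarrow> ball (p i) e \<subseteq> V i"
proof -
  have "\<forall>i\<in>I. \<exists>r. r > 0 \<and> ball (p i) r \<subseteq> V i"
    using assms(2,3) open_contains_ball by blast
  then obtain r where r: "\<And>i. i \<in> I \<Longrightarrow> r i > 0 \<and> ball (p i) (r i) \<subseteq> V i"
    by (metis bchoice)
  define e where "e = Min (insert 1 (r ` I))"
  show ?thesis
  proof
    show "e > 0" unfolding e_def using assms(1) r by simp
    fix i assume "i \<in> I"
    then have "e \<le> r i" unfolding e_def using assms(1) by (intro Min_le) auto
    then show "ball (p i) e \<subseteq> V i" using r[OF \<open>i \<in> I\<close>] subset_ball by blast
  qed
qed

section \<open>Vietoris topology\<close>

lemma openin_vietoris_upper: "open U \<Longrightarrow> openin vietoris {K \<in> compacts. K \<subseteq> U}"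
  unfolding vietoris_def by (rule topology_generated_by_Basis, rule UnI1) blast

lemma openin_vietoris_lower: "open U \<Longrightarrow> openin vietoris {K \<in> compacts. K \<inter> U \<noteq> {}}"
  unfolding vietoris_def by (rule topology_generated_by_Basis, rule UnI2) blast

definition vietoris_box :: "'a::topological_space set \<Rightarrow> 'a set set \<Rightarrow> 'a set set" where
  "vietoris_box V \<Q> = {K \<in> compacts. K \<subseteq> V \<and> (\<forall>Q\<in>\<Q>. K \<inter> Q \<noteq> {})}"

lemma vietoris_box_Int:
  "vietoris_box V \<Q> \<inter> vietoris_box V' \<Q>' = vietoris_box (V \<inter> V') (\<Q> \<union> \<Q>')"
  unfolding vietoris_box_def by auto

lemma openin_vietoris_box:
  assumes "open V" "finite \<Q>" "\<And>Q. Q \<in> \<Q> \<Longrightarrow> open Q"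
  shows "openin vietoris (vietoris_box V \<Q>)"
proof -
  have "vietoris_box V \<Q> =
      \<Inter>(insert {K \<in> compacts. K \<subseteq> V} ((\<lambda>Q. {K \<in> compacts. K \<inter> Q \<noteq> {}}) ` \<Q>))"
    unfolding vietoris_box_def by auto
  also have "openin vietoris \<dots>"
    using assms by (intro openin_Inter) (auto intro: openin_vietoris_upper openin_vietoris_lower)
  finally show ?thesis .
qed

lemma openin_vietoris_imp_box:
  assumes "openin vietoris W" "K \<in> W"
  obtains V \<Q> where "open V" "finite \<Q>" "\<forall>Q\<in>\<Q>. open Q"
    "K \<in> vietoris_box V \<Q>" "vietoris_box V \<Q> \<subseteq> W"
proof -
  have "generate_topology_on
      ({{K \<in> compacts. K \<subseteq> U} | U. open U} \<union> {{K \<in> compacts. K \<inter> U \<noteq> {}} | U. open U}) W"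
    using assms(1) unfolding vietoris_def by (rule openin_topology_generated_by)
  then have "\<exists>V \<Q>. open V \<and> finite \<Q> \<and> (\<forall>Q\<in>\<Q>. open Q) \<and> K \<in> vietoris_box V \<Q> \<and> vietoris_box V \<Q> \<subseteq> W"
    using assms(2)
  proof (induction arbitrary: K rule: generate_topology_on.induct)
    case (Int a b)
    obtain V \<Q> where
      "open V" "finite \<Q>" "\<forall>Q\<in>\<Q>. open Q" "K \<in> vietoris_box V \<Q>" "vietoris_box V \<Q> \<subseteq> a"
      using Int.IH(1)[of K] Int.prems by blast
    moreover obtain V' \<Q>' where
      "open V'" "finite \<Q>'" "\<forall>Q\<in>\<Q>'. open Q" "K \<in> vietoris_box V' \<Q>'" "vietoris_box V' \<Q>' \<subseteq> b"
      using Int.IH(2)[of K] Int.prems by blast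
    moreover have "vietoris_box (V \<inter> V') (\<Q> \<union> \<Q>') \<subseteq> a \<inter> b"
      using calculation unfolding vietoris_box_Int[symmetric] by blast
    ultimately show ?case
      by (intro exI[of _ "V \<inter> V'"] exI[of _ "\<Q> \<union> \<Q>'"] conjI)
        (simp_all add: open_Int ball_Un flip: vietoris_box_Int)
  next
    case (UN \<K>)
    then obtain k where k: "k \<in> \<K>" "K \<in> k" by (elim UnionE)
    then obtain V \<Q> where
      "open V" "finite \<Q>" "\<forall>Q\<in>\<Q>. open Q" "K \<in> vietoris_box V \<Q>" "vietoris_box V \<Q> \<subseteq> k"
      using UN.IH[OF k] by blast
    with k show ?case by (intro exI[of _ V] exI[of _ \<Q>]) blast
  next
    case (Basis s)
    then obtain U where "open U" "s = vietoris_box U {} \<or> s = vietoris_box UNIV {U}"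
      unfolding vietoris_box_def by blast
    then show ?case
    proof (elim disjE)
      assume "s = vietoris_box U {}"
      with \<open>open U\<close> Basis.prems show ?case by (intro exI[of _ U] exI[of _ "{}"]) simp
    next
      assume "s = vietoris_box UNIV {U}"
      with \<open>open U\<close> Basis.prems show ?case by (intro exI[of _ UNIV] exI[of _ "{U}"]) simp
    qed
  qed simp
  with that show ?thesis by (elim exE conjE)
qed

lemma open_hereditary_imp_nbhd:
  assumes "openin vietoris \<U>" "hereditary_compacts \<U>" "K \<in> \<U>"
  obtains V where "open V" "K \<subseteq> V" "\<And>C. compact C \<Longrightarrow> C \<subseteq> V \<Longrightarrow> C \<in> \<U>"
proof -
  obtain V \<Q> where V: "open V" "finite \<Q>" "K \<in> vietoris_box V \<Q>" "vietoris_box V \<Q> \<subseteq> \<U>"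
    using openin_vietoris_imp_box[OF assms(1,3)] by (metis (no_types))
  then have KV: "K \<subseteq> V" unfolding vietoris_box_def by blast
  have "\<forall>Q\<in>\<Q>. \<exists>x. x \<in> K \<inter> Q" using V(3) unfolding vietoris_box_def by blast
  then obtain p where p: "\<And>Q. Q \<in> \<Q> \<Longrightarrow> p Q \<in> K \<inter> Q" by metis
  show ?thesis
  proof
    fix C assume C: "compact C" "C \<subseteq> V"
    \<comment> \<open>adjoining one point of K from each Q puts C into the box; heredity then removes them\<close>
    have "compact (C \<union> p ` \<Q>)" using C(1) V(2) by (simp add: compact_Un finite_imp_compact)
    moreover have "C \<union> p ` \<Q> \<subseteq> V" using C(2) KV p by blast
    moreover have "\<forall>Q\<in>\<Q>. (C \<union> p ` \<Q>) \<inter> Q \<noteq> {}" using p by blast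
    ultimately have "C \<union> p ` \<Q> \<in> \<U>" using V(4) unfolding vietoris_box_def compacts_def by blast
    with assms(2) C show "C \<in> \<U>" unfolding hereditary_compacts_def compacts_def by blast
  qed (use V KV in auto)
qed

section \<open>Probability measures and the weak topology\<close>

lemma prob_measuresD:
  assumes "M \<in> prob_measures"
  shows "prob_space M" "sets M = sets borel" "space M = UNIV"
  using assms sets_eq_imp_space_eq[of M borel] unfolding prob_measures_def by auto

lemma measurable_prob_measure: "M \<in> prob_measures \<Longrightarrow> measurable M N = measurable borel N"
  by (rule measurable_cong_sets) (simp_all add: prob_measuresD)

lemma integrable_prob_measure_bounded:
  fixes f :: "'a::topological_space \<Rightarrow> real"
  assumes "M \<in> prob_measures" "f \<in> borel_measurable borel" "\<And>x. \<bar>f x\<bar> \<le> B"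
  shows "integrable M f"
proof -
  interpret prob_space M using assms(1) by (rule prob_measuresD)
  show ?thesis
    using assms by (intro integrable_const_bound[of _ B]) (simp_all add: measurable_prob_measure)
qed

lemma exists_compact_measure_gt:
  fixes M :: "'a::polish_space measure"
  assumes "finite_measure M" "sets M = sets borel" "B \<in> sets borel" "r < measure M B"
  obtains K where "compact K" "K \<subseteq> B" "r < measure M K"
proof (cases "r < 0")
  case True
  with that show ?thesis by (metis compact_empty empty_subsetI measure_empty)
next
  case False
  interpret finite_measure M by (rule assms(1))
  have "ennreal r < emeasure M B"
    using assms(4) False by (simp add: emeasure_eq_measure ennreal_less_iff)
  also have "\<dots> = (SUP K \<in> {K. K \<subseteq> B \<and> compact K}. emeasure M K)"
    using assms(2,3) by (intro inner_regular) simp_all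
  finally obtain K where "K \<subseteq> B" "compact K" "ennreal r < emeasure M K"
    unfolding less_SUP_iff by blast
  with False that show ?thesis
    by (simp add: emeasure_eq_measure ennreal_less_iff)
qed

lemma prob_measures_tight:
  fixes \<mu> :: "'a::polish_space measure"
  assumes "\<mu> \<in> prob_measures" "\<delta> > 0"
  obtains K where "compact K" "measure \<mu> (UNIV - K) < \<delta>"
proof -
  interpret prob_space \<mu> using assms(1) by (rule prob_measuresD)
  have space: "space \<mu> = UNIV" by (rule prob_measuresD(3)[OF assms(1)])
  have "1 - \<delta> < prob UNIV" using assms(2) prob_space unfolding space by simp
  then obtain K where "compact K" "1 - \<delta> < prob K"
    using exists_compact_measure_gt[OF finite_measure_axioms prob_measuresD(2)[OF assms(1)], of UNIV]
    by auto
  moreover have "prob (UNIV - K) = 1 - prob K"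
    using prob_compl[of K] \<open>compact K\<close> assms(1) unfolding space by (simp add: prob_measuresD borel_compact)
  ultimately show ?thesis using that by simp
qed

lemma prob_measures_distr:
  assumes "\<mu> \<in> prob_measures" "g \<in> borel_measurable borel" "\<And>x. g x \<in> F" "F \<in> sets borel"
  shows "distr \<mu> borel g \<in> prob_measures" "measure (distr \<mu> borel g) F = 1"
proof -
  interpret prob_space \<mu> using assms(1) by (rule prob_measuresD)
  have g: "g \<in> measurable \<mu> borel" using assms(1,2) by (simp add: measurable_prob_measure)
  show "distr \<mu> borel g \<in> prob_measures"
    unfolding prob_measures_def using prob_space_distr[OF g] by simp
  have "measure (distr \<mu> borel g) F = prob (g -` F \<inter> space \<mu>)"
    using g assms(4) by (rule measure_distr)
  also have "g -` F \<inter> space \<mu> = space \<mu>" using assms(3) by auto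
  finally show "measure (distr \<mu> borel g) F = 1" by (simp add: prob_space)
qed

lemma (in prob_space) abs_integral_le_split:
  fixes h :: "'a \<Rightarrow> real"
  assumes "integrable M h" "K \<in> events" "0 \<le> a"
    and "\<And>x. x \<in> K \<Longrightarrow> \<bar>h x\<bar> \<le> a" "\<And>x. x \<in> space M \<Longrightarrow> \<bar>h x\<bar> \<le> c"
  shows "\<bar>\<integral>x. h x \<partial>M\<bar> \<le> a + c * prob (space M - K)"
proof -
  have ind: "integrable M (indicator (space M - K) :: 'a \<Rightarrow> real)"
    using assms(2) by (intro integrable_real_indicator) (simp_all add: less_top[symmetric])
  have "\<bar>\<integral>x. h x \<partial>M\<bar> \<le> (\<integral>x. \<bar>h x\<bar> \<partial>M)"
    using integral_norm_bound[of M h] by simp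
  also have "\<dots> \<le> (\<integral>x. a + c * indicator (space M - K) x \<partial>M)"
  proof (intro integral_mono)
    show "integrable M (\<lambda>x. a + c * indicator (space M - K) x)" using ind by simp
    show "\<bar>h x\<bar> \<le> a + c * indicator (space M - K) x" if "x \<in> space M" for x
      using assms(3) assms(4)[of x] assms(5)[of x] that by (cases "x \<in> K") simp_all
  qed (use assms(1) in simp)
  also have "\<dots> = a + c * prob (space M - K)"
    using ind by (simp add: prob_space Int_absorb2)
  finally show ?thesis .
qed

lemma topspace_weak_topology: "topspace weak_topology = (prob_measures :: 'a::topological_space measure set)"
proof -
  let ?S = "{{M \<in> prob_measures. (\<integral>x. f x \<partial>M) \<in> V} | f V.
        continuous_on UNIV (f :: 'a \<Rightarrow> real) \<and> bounded (range f) \<and> open V}"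
  have "prob_measures \<in> ?S"
    by (rule CollectI, rule exI[of _ "\<lambda>_. 0"], rule exI[of _ UNIV]) auto
  moreover have "\<Union>?S \<subseteq> prob_measures" by (rule Union_least) blast
  ultimately show ?thesis
    unfolding weak_topology_def topology_generated_by_topspace by (intro equalityI Union_upper)
qed

lemma openin_weak_topology_integral:
  fixes f :: "'a::topological_space \<Rightarrow> real"
  assumes "continuous_on UNIV f" "bounded (range f)" "open V"
  shows "openin weak_topology {M \<in> prob_measures. (\<integral>x. f x \<partial>M) \<in> V}"
  unfolding weak_topology_def
  by (rule topology_generated_by_Basis, rule CollectI, rule exI[of _ f], rule exI[of _ V]) (use assms in simp)

lemma weak_topology_subbasic_nbhd:
  fixes \<mu> :: "'a::topological_space measure"
  assumes "openin weak_topology W" "\<mu> \<in> W"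
  obtains \<S> :: "(('a \<Rightarrow> real) \<times> real set) set" where "finite \<S>"
    "\<forall>(f, V)\<in>\<S>. continuous_on UNIV f \<and> bounded (range f) \<and> open V \<and> (\<integral>x. f x \<partial>\<mu>) \<in> V"
    "{\<nu> \<in> prob_measures. \<forall>(f, V)\<in>\<S>. (\<integral>x. f x \<partial>\<nu>) \<in> V} \<subseteq> W"
proof -
  define S where "S = {{M \<in> prob_measures. (\<integral>x. f x \<partial>M) \<in> V} | f V.
        continuous_on UNIV (f :: 'a \<Rightarrow> real) \<and> bounded (range f) \<and> open V}"
  have "generate_topology_on S W"
    using assms(1) unfolding weak_topology_def S_def by (rule openin_topology_generated_by)
  then obtain \<F> where \<F>: "finite \<F>" "\<F> \<subseteq> S" "\<mu> \<in> \<Inter>\<F>" "\<Inter>\<F> \<subseteq> W"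
    using assms(2) by (rule generate_topology_on_finite_Inter_nbhd)
  have "\<forall>A\<in>\<F>. \<exists>fV. A = {M \<in> prob_measures. (\<integral>x. fst fV x \<partial>M) \<in> snd fV} \<and>
      continuous_on UNIV (fst fV :: 'a \<Rightarrow> real) \<and> bounded (range (fst fV)) \<and> open (snd fV)"
  proof
    fix A assume "A \<in> \<F>"
    with \<F>(2) have "A \<in> S" by (rule subsetD)
    then obtain f V where "A = {M \<in> prob_measures. (\<integral>x. f x \<partial>M) \<in> V}"
        "continuous_on UNIV (f :: 'a \<Rightarrow> real)" "bounded (range f)" "open V"
      unfolding S_def by (elim CollectE exE conjE)
    then show "\<exists>fV. A = {M \<in> prob_measures. (\<integral>x. fst fV x \<partial>M) \<in> snd fV} \<and>
        continuous_on UNIV (fst fV :: 'a \<Rightarrow> real) \<and> bounded (range (fst fV)) \<and> open (snd fV)"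
      by (intro exI[of _ "(f, V)"]) simp
  qed
  then obtain p where "\<forall>A\<in>\<F>. A = {M \<in> prob_measures. (\<integral>x. fst (p A) x \<partial>M) \<in> snd (p A)} \<and>
      continuous_on UNIV (fst (p A) :: 'a \<Rightarrow> real) \<and> bounded (range (fst (p A))) \<and> open (snd (p A))"
    by (rule bchoice[THEN exE])
  then have p: "\<And>A. A \<in> \<F> \<Longrightarrow> A = {M \<in> prob_measures. (\<integral>x. fst (p A) x \<partial>M) \<in> snd (p A)} \<and>
      continuous_on UNIV (fst (p A)) \<and> bounded (range (fst (p A))) \<and> open (snd (p A))"
    by blast
  show ?thesis
  proof (rule that[of "p ` \<F>"])
    show "finite (p ` \<F>)" using \<F>(1) by simp
    show "\<forall>(f, V)\<in>p ` \<F>. continuous_on UNIV f \<and> bounded (range f) \<and> open V \<and> (\<integral>x. f x \<partial>\<mu>) \<in> V"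
    proof
      fix fV assume "fV \<in> p ` \<F>"
      then obtain A where "A \<in> \<F>" "fV = p A" by blast
      with p[OF \<open>A \<in> \<F>\<close>] \<F>(3) show "case fV of (f, V) \<Rightarrow>
          continuous_on UNIV f \<and> bounded (range f) \<and> open V \<and> (\<integral>x. f x \<partial>\<mu>) \<in> V"
        by (auto simp: case_prod_beta)
    qed
    show "{\<nu> \<in> prob_measures. \<forall>(f, V)\<in>p ` \<F>. (\<integral>x. f x \<partial>\<nu>) \<in> V} \<subseteq> W"
      using \<F>(4) p by (fastforce simp: case_prod_beta)
  qed
qed

lemma weak_topology_nbhd:
  fixes \<mu> :: "'a::topological_space measure"
  assumes "openin weak_topology W" "\<mu> \<in> W"
  obtains \<Phi> :: "('a \<Rightarrow> real) set" and \<eta> :: real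
  where "finite \<Phi>" "\<And>f. f \<in> \<Phi> \<Longrightarrow> continuous_on UNIV f"
    "\<And>f. f \<in> \<Phi> \<Longrightarrow> bounded (range f)" "\<eta> > 0"
    "{\<nu> \<in> prob_measures. \<forall>f\<in>\<Phi>. \<bar>(\<integral>x. f x \<partial>\<nu>) - (\<integral>x. f x \<partial>\<mu>)\<bar> < \<eta>} \<subseteq> W"
proof -
  obtain \<S> :: "(('a \<Rightarrow> real) \<times> real set) set" where \<S>: "finite \<S>"
    "\<forall>(f, V)\<in>\<S>. continuous_on UNIV f \<and> bounded (range f) \<and> open V \<and> (\<integral>x. f x \<partial>\<mu>) \<in> V"
    "{\<nu> \<in> prob_measures. \<forall>(f, V)\<in>\<S>. (\<integral>x. f x \<partial>\<nu>) \<in> V} \<subseteq> W"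
    by (rule weak_topology_subbasic_nbhd[OF assms])
  have "open (snd fV)" "(\<integral>x. fst fV x \<partial>\<mu>) \<in> snd fV" if "fV \<in> \<S>" for fV
    using \<S>(2) that by (auto simp: case_prod_beta)
  then obtain \<eta> where "\<eta> > 0" and \<eta>: "\<And>fV. fV \<in> \<S> \<Longrightarrow> ball (\<integral>x. fst fV x \<partial>\<mu>) \<eta> \<subseteq> snd fV"
    using finite_open_common_ball[of \<S> snd "\<lambda>fV. \<integral>x. fst fV x \<partial>\<mu>", OF \<S>(1)] by blast
  show ?thesis
  proof (rule that[of "fst ` \<S>" \<eta>])
    show "{\<nu> \<in> prob_measures. \<forall>f\<in>fst ` \<S>. \<bar>(\<integral>x. f x \<partial>\<nu>) - (\<integral>x. f x \<partial>\<mu>)\<bar> < \<eta>} \<subseteq> W"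
      using \<S>(3) \<eta> by (fastforce simp: subset_iff dist_real_def abs_minus_commute)
  qed (use \<S>(1,2) \<open>\<eta> > 0\<close> in \<open>auto simp: case_prod_beta\<close>)
qed

lemma weak_topology_measure_gt_nbhd:
  fixes C V :: "'a::metric_space set"
  assumes "closed C" "open V" "C \<subseteq> V" "\<nu> \<in> prob_measures" "r < measure \<nu> C"
  obtains W where "openin weak_topology W" "\<nu> \<in> W" "\<And>\<mu>. \<mu> \<in> W \<Longrightarrow> r < measure \<mu> V"
proof -
  obtain h :: "'a \<Rightarrow> real" where h: "continuous_on UNIV h" "\<And>x. 0 \<le> h x" "\<And>x. h x \<le> 1"
    "\<And>x. x \<in> C \<Longrightarrow> h x = 1" "\<And>x. x \<notin> V \<Longrightarrow> h x = 0"
    using continuous_bump_between[OF assms(1-3)] by blast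
  have h_abs: "\<bar>h x\<bar> \<le> 1" for x using h(2)[of x] h(3)[of x] by simp
  then have "bounded (range h)" by (intro boundedI[of _ 1]) auto
  have h_int: "integrable M h" if "M \<in> prob_measures" for M
    using that borel_measurable_continuous_onI[OF h(1)] h_abs by (rule integrable_prob_measure_bounded)
  have ind_int: "integrable M (indicator A :: 'a \<Rightarrow> real)" if "M \<in> prob_measures" "A \<in> sets borel" for M A
    using that by (intro integrable_prob_measure_bounded[where B=1]) (auto simp: indicator_def)
  have measure_eq: "measure M A = (\<integral>x. indicator A x \<partial>M)" if "M \<in> prob_measures" for M A
    using that by (simp add: prob_measuresD)
  show ?thesis
  proof (rule that[of "{M \<in> prob_measures. (\<integral>x. h x \<partial>M) \<in> {r<..}}"])
    show "openin weak_topology {M \<in> prob_measures. (\<integral>x. h x \<partial>M) \<in> {r<..}}"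
      using h(1) \<open>bounded (range h)\<close> by (rule openin_weak_topology_integral) simp
    have "measure \<nu> C \<le> (\<integral>x. h x \<partial>\<nu>)"
      unfolding measure_eq[OF assms(4)] using assms(1,4) h(2,4)
      by (intro integral_mono ind_int h_int) (auto simp: indicator_def borel_closed)
    with assms(4,5) show "\<nu> \<in> {M \<in> prob_measures. (\<integral>x. h x \<partial>M) \<in> {r<..}}" by simp
    fix \<mu> assume "\<mu> \<in> {M \<in> prob_measures. (\<integral>x. h x \<partial>M) \<in> {r<..}}"
    then have \<mu>: "\<mu> \<in> prob_measures" "r < (\<integral>x. h x \<partial>\<mu>)" by simp_all
    note \<mu>(2)
    also have "(\<integral>x. h x \<partial>\<mu>) \<le> measure \<mu> V"
      unfolding measure_eq[OF \<mu>(1)] using assms(2) \<mu>(1) h(3,5)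
      by (intro integral_mono ind_int h_int) (auto simp: indicator_def borel_open)
    finally show "r < measure \<mu> V" .
  qed
qed

section \<open>Approximation by measures concentrated on members of the family\<close>

lemma finite_cover_measurable_selection:
  assumes "finite T" "T \<noteq> {}" "\<And>t. t \<in> T \<Longrightarrow> B t \<in> sets M" "y ` T \<subseteq> space N"
  obtains g where "g \<in> M \<rightarrow>\<^sub>M N" "\<And>x. g x \<in> y ` T"
    "\<And>x. x \<in> (\<Union>t\<in>T. B t) \<Longrightarrow> \<exists>t\<in>T. x \<in> B t \<and> g x = y t"
proof -
  have "\<exists>g. g \<in> M \<rightarrow>\<^sub>M N \<and> (\<forall>x. g x \<in> y ` T) \<and> (\<forall>x\<in>\<Union>t\<in>T. B t. \<exists>t\<in>T. x \<in> B t \<and> g x = y t)"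
    using assms(1,2,3,4)
  proof (induction T rule: finite_ne_induct)
    case (singleton t)
    then show ?case by (intro exI[of _ "\<lambda>_. y t"]) auto
  next
    case (insert t T)
    have "\<exists>g. g \<in> M \<rightarrow>\<^sub>M N \<and> (\<forall>x. g x \<in> y ` T) \<and> (\<forall>x\<in>\<Union>t\<in>T. B t. \<exists>t\<in>T. x \<in> B t \<and> g x = y t)"
      by (rule insert.IH) (use insert.prems in auto)
    then obtain g where g: "g \<in> M \<rightarrow>\<^sub>M N" "\<forall>x. g x \<in> y ` T"
        "\<forall>x\<in>\<Union>t\<in>T. B t. \<exists>t\<in>T. x \<in> B t \<and> g x = y t"
      by (elim exE conjE)
    have "(\<lambda>x. if x \<in> B t then y t else g x) \<in> M \<rightarrow>\<^sub>M N"
      using insert.prems g(1) by (intro measurable_If_set) auto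
    with g(2,3) show ?case
      by (intro exI[of _ "\<lambda>x. if x \<in> B t then y t else g x"]) auto
  qed
  with that show ?thesis by blast
qed

lemma finite_continuous_common_radius:
  fixes \<Phi> :: "('a::metric_space \<Rightarrow> real) set"
  assumes "finite \<Phi>" "\<And>f. f \<in> \<Phi> \<Longrightarrow> continuous_on UNIV f" "e > 0"
  obtains r where "\<And>x. r x > 0" "\<And>f x y. f \<in> \<Phi> \<Longrightarrow> dist y x < r x \<Longrightarrow> \<bar>f y - f x\<bar> < e"
proof -
  have "\<exists>d>0. \<forall>f\<in>\<Phi>. \<forall>y. dist y x < d \<longrightarrow> \<bar>f y - f x\<bar> < e" for x
  proof -
    have "open (f -` ball (f x) e)" "x \<in> f -` ball (f x) e" if "f \<in> \<Phi>" for f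
      using assms(2)[OF that] assms(3) by (simp_all add: open_vimage)
    then obtain d where "d > 0" "\<And>f. f \<in> \<Phi> \<Longrightarrow> ball x d \<subseteq> f -` ball (f x) e"
      using finite_open_common_ball[of \<Phi> "\<lambda>f. f -` ball (f x) e" "\<lambda>_. x", OF assms(1)] by blast
    then show ?thesis by (auto simp: subset_iff dist_commute dist_real_def)
  qed
  then obtain r where "\<forall>x. r x > 0 \<and> (\<forall>f\<in>\<Phi>. \<forall>y. dist y x < r x \<longrightarrow> \<bar>f y - f x\<bar> < e)"
    by metis
  with that show ?thesis by blast
qed

lemma dense_hereditary_map_near_compact:
  fixes \<U> :: "'a::metric_space set set"
  assumes dense: "vietoris closure_of \<U> = topspace vietoris" and hered: "hereditary_compacts \<U>"
    and K: "compact K" "K \<noteq> {}" and r: "\<And>x. r x > 0"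
  obtains F g where "F \<in> \<U>" "finite F" "g \<in> borel_measurable borel" "\<And>x. g x \<in> F"
    "\<And>x. x \<in> K \<Longrightarrow> \<exists>t. dist x t < r t \<and> dist (g x) t < r t"
proof -
  have "K \<subseteq> (\<Union>x\<in>K. ball x (r x))" using r by force
  then obtain T where T: "T \<subseteq> K" "finite T" "K \<subseteq> (\<Union>t\<in>T. ball t (r t))"
    using compactE_image[OF K(1), of K "\<lambda>x. ball x (r x)"] by blast
  then have "T \<noteq> {}" using K(2) by blast
  let ?box = "vietoris_box (\<Union>t\<in>T. ball t (r t)) ((\<lambda>t. ball t (r t)) ` T)"
  have "T \<in> ?box"
    using T(2) r unfolding vietoris_box_def compacts_def by (auto intro: finite_imp_compact)
  moreover have "openin vietoris ?box"
    using T(2) by (intro openin_vietoris_box) auto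
  ultimately obtain K' where K': "K' \<in> \<U>" "K' \<in> ?box"
    using dense unfolding dense_intersects_open by blast
  then have "\<forall>t\<in>T. \<exists>z. z \<in> K' \<inter> ball t (r t)" unfolding vietoris_box_def by blast
  then obtain y where y: "\<And>t. t \<in> T \<Longrightarrow> y t \<in> K' \<inter> ball t (r t)" by metis
  have "y ` T \<subseteq> K'" using y by blast
  then have "y ` T \<in> \<U>"
    using hered K'(1) finite_imp_compact[of "y ` T"] T(2)
    unfolding hereditary_compacts_def compacts_def by blast
  obtain g where g: "g \<in> borel_measurable borel" "\<And>x. g x \<in> y ` T"
    "\<And>x. x \<in> (\<Union>t\<in>T. ball t (r t)) \<Longrightarrow> \<exists>t\<in>T. x \<in> ball t (r t) \<and> g x = y t"
    using finite_cover_measurable_selection[OF T(2) \<open>T \<noteq> {}\<close>, of "\<lambda>t. ball t (r t)" borel y borel]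
    by auto
  show ?thesis
  proof (rule that[OF \<open>y ` T \<in> \<U>\<close> _ g(1,2)])
    show "finite (y ` T)" using T(2) by simp
    fix x assume "x \<in> K"
    then obtain t where "t \<in> T" "x \<in> ball t (r t)" "g x = y t" using T(3) g(3) by blast
    with y show "\<exists>t. dist x t < r t \<and> dist (g x) t < r t" by (auto simp: dist_commute)
  qed
qed

lemma dense_hereditary_map_integral_approx:
  fixes \<U> :: "'a::polish_space set set" and \<Phi> :: "('a \<Rightarrow> real) set"
  assumes dense: "vietoris closure_of \<U> = topspace vietoris" and hered: "hereditary_compacts \<U>"
    and \<mu>: "\<mu> \<in> prob_measures" and \<Phi>: "finite \<Phi>"
    and cont: "\<And>f. f \<in> \<Phi> \<Longrightarrow> continuous_on UNIV f" and bdd: "\<And>f. f \<in> \<Phi> \<Longrightarrow> bounded (range f)"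
    and "\<eta> > 0"
  obtains F g where "F \<in> \<U>" "finite F" "g \<in> borel_measurable borel" "\<And>x. g x \<in> F"
    "\<And>f. f \<in> \<Phi> \<Longrightarrow> \<bar>(\<integral>x. f (g x) \<partial>\<mu>) - (\<integral>x. f x \<partial>\<mu>)\<bar> < \<eta>"
proof -
  interpret prob_space \<mu> using \<mu> by (rule prob_measuresD)
  have "bounded (\<Union>f\<in>\<Phi>. range f)" using \<Phi> bdd by (intro bounded_UN) auto
  then obtain B where B: "B > 0" "\<And>f x. f \<in> \<Phi> \<Longrightarrow> \<bar>f x\<bar> \<le> B"
    unfolding bounded_pos by force
  define \<delta> where "\<delta> = min (1/2) (\<eta> / (4 * B))"
  have \<delta>: "0 < \<delta>" "\<delta> \<le> 1/2" "2 * B * \<delta> \<le> \<eta> / 2"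
    unfolding \<delta>_def using \<open>\<eta> > 0\<close> B(1) by (auto simp: field_simps min_def)
  obtain K where K: "compact K" "prob (space \<mu> - K) < \<delta>"
    using prob_measures_tight[OF \<mu> \<delta>(1)] by (auto simp: prob_measuresD(3)[OF \<mu>])
  have K_event: "K \<in> events" using K(1) \<mu> by (simp add: prob_measuresD borel_compact)
  have "K \<noteq> {}" using K(2) \<delta>(2) prob_space by auto
  obtain r where r: "\<And>x. r x > 0" "\<And>f x y. f \<in> \<Phi> \<Longrightarrow> dist y x < r x \<Longrightarrow> \<bar>f y - f x\<bar> < \<eta>/4"
    using finite_continuous_common_radius[OF \<Phi> cont, of "\<eta>/4"] \<open>\<eta> > 0\<close> by auto
  obtain F g where F: "F \<in> \<U>" "finite F" and g: "g \<in> borel_measurable borel" "\<And>x. g x \<in> F"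
    and near: "\<And>x. x \<in> K \<Longrightarrow> \<exists>t. dist x t < r t \<and> dist (g x) t < r t"
    using dense_hereditary_map_near_compact[OF dense hered K(1) \<open>K \<noteq> {}\<close>, of r] r(1) by blast
  show ?thesis
  proof (rule that[OF F g])
    fix f assume f: "f \<in> \<Phi>"
    have f_meas: "f \<in> borel_measurable borel" using cont[OF f] by (rule borel_measurable_continuous_onI)
    \<comment> \<open>on K both x and g x lie within r t of a common t; off K the bound 2B is used\<close>
    have "\<bar>f (g x) - f x\<bar> \<le> \<eta>/2" if x: "x \<in> K" for x
    proof -
      obtain t where "dist x t < r t" "dist (g x) t < r t" using near[OF x] by blast
      then have "\<bar>f x - f t\<bar> < \<eta>/4" "\<bar>f (g x) - f t\<bar> < \<eta>/4" using r(2)[OF f] by auto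
      then show ?thesis by linarith
    qed
    moreover have "\<bar>f (g x) - f x\<bar> \<le> 2 * B" for x using B(2)[OF f, of x] B(2)[OF f, of "g x"] by linarith
    moreover have "integrable \<mu> (\<lambda>x. f (g x))" "integrable \<mu> f"
      using B(2)[OF f] measurable_compose[OF g(1) f_meas] f_meas
      by (auto intro: integrable_prob_measure_bounded[OF \<mu>])
    ultimately have "\<bar>\<integral>x. f (g x) - f x \<partial>\<mu>\<bar> \<le> \<eta>/2 + 2 * B * prob (space \<mu> - K)"
      using \<open>\<eta> > 0\<close> by (intro abs_integral_le_split[OF _ K_event] integrable_diff) auto
    also have "\<dots> < \<eta>"
      using K(2) B(1) \<delta>(3) mult_strict_left_mono[of "prob (space \<mu> - K)" \<delta> "2 * B"] by linarith
    also have "(\<integral>x. f (g x) - f x \<partial>\<mu>) = (\<integral>x. f (g x) \<partial>\<mu>) - (\<integral>x. f x \<partial>\<mu>)"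
      using \<open>integrable \<mu> (\<lambda>x. f (g x))\<close> \<open>integrable \<mu> f\<close> by simp
    finally show "\<bar>(\<integral>x. f (g x) \<partial>\<mu>) - (\<integral>x. f x \<partial>\<mu>)\<bar> < \<eta>" .
  qed
qed

lemma dense_hereditary_pushforward_approx:
  fixes \<U> :: "'a::polish_space set set" and \<Phi> :: "('a \<Rightarrow> real) set"
  assumes dense: "vietoris closure_of \<U> = topspace vietoris" and hered: "hereditary_compacts \<U>"
    and \<mu>: "\<mu> \<in> prob_measures" and \<Phi>: "finite \<Phi>"
    and cont: "\<And>f. f \<in> \<Phi> \<Longrightarrow> continuous_on UNIV f" and bdd: "\<And>f. f \<in> \<Phi> \<Longrightarrow> bounded (range f)"
    and "\<eta> > 0"
  obtains \<nu> F where "\<nu> \<in> prob_measures" "F \<in> \<U>" "finite F" "measure \<nu> F = 1"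
    "\<And>f. f \<in> \<Phi> \<Longrightarrow> \<bar>(\<integral>x. f x \<partial>\<nu>) - (\<integral>x. f x \<partial>\<mu>)\<bar> < \<eta>"
proof -
  obtain F g where F: "F \<in> \<U>" "finite F" and g: "g \<in> borel_measurable borel" "\<And>x. g x \<in> F"
    and approx: "\<And>f. f \<in> \<Phi> \<Longrightarrow> \<bar>(\<integral>x. f (g x) \<partial>\<mu>) - (\<integral>x. f x \<partial>\<mu>)\<bar> < \<eta>"
    using dense_hereditary_map_integral_approx[OF assms] by blast
  have F_borel: "F \<in> sets borel" using F(2) by (simp add: borel_closed finite_imp_closed)
  show ?thesis
  proof (rule that)
    show "distr \<mu> borel g \<in> prob_measures" "measure (distr \<mu> borel g) F = 1"
      using prob_measures_distr[OF \<mu> g F_borel] by simp_all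
    fix f assume "f \<in> \<Phi>"
    moreover have "(\<integral>x. f x \<partial>distr \<mu> borel g) = (\<integral>x. f (g x) \<partial>\<mu>)"
      using \<open>f \<in> \<Phi>\<close> \<mu> g(1) cont
      by (intro integral_distr) (simp_all add: measurable_prob_measure borel_measurable_continuous_onI)
    ultimately show "\<bar>(\<integral>x. f x \<partial>distr \<mu> borel g) - (\<integral>x. f x \<partial>\<mu>)\<bar> < \<eta>" using approx by simp
  qed (use F in simp_all)
qed

section \<open>Density of the interior and co-meagerness\<close>

lemma measure_gt_imp_interior:
  fixes \<U> :: "'a::polish_space set set"
  assumes "openin vietoris \<U>" "hereditary_compacts \<U>" "K \<in> \<U>" "compact K"
    and "\<nu> \<in> prob_measures" "1 - \<epsilon> < measure \<nu> K"
  shows "\<nu> \<in> weak_topology interior_of {\<mu> \<in> prob_measures. \<exists>K\<in>\<U>. measure \<mu> K \<ge> 1 - \<epsilon>}"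
proof -
  obtain V where V: "open V" "K \<subseteq> V" "\<And>C. compact C \<Longrightarrow> C \<subseteq> V \<Longrightarrow> C \<in> \<U>"
    using open_hereditary_imp_nbhd[OF assms(1-3)] by blast
  obtain W where W: "openin weak_topology W" "\<nu> \<in> W" "\<And>\<mu>. \<mu> \<in> W \<Longrightarrow> 1 - \<epsilon> < measure \<mu> V"
    using weak_topology_measure_gt_nbhd[OF compact_imp_closed[OF assms(4)] V(1,2) assms(5,6)] by blast
  \<comment> \<open>inner regularity moves the mass of V onto a compact subset, which lies in the family\<close>
  have "W \<subseteq> {\<mu> \<in> prob_measures. \<exists>K\<in>\<U>. measure \<mu> K \<ge> 1 - \<epsilon>}"
  proof
    fix \<mu> assume "\<mu> \<in> W"
    then have \<mu>: "\<mu> \<in> prob_measures" using W(1) topspace_weak_topology openin_subset by blast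
    interpret prob_space \<mu> using \<mu> by (rule prob_measuresD)
    obtain C where "compact C" "C \<subseteq> V" "1 - \<epsilon> < measure \<mu> C"
      by (rule exists_compact_measure_gt[OF finite_measure_axioms prob_measuresD(2)[OF \<mu>]
            borel_open[OF V(1)] W(3)[OF \<open>\<mu> \<in> W\<close>]])
    with V(3) \<mu> show "\<mu> \<in> {\<mu> \<in> prob_measures. \<exists>K\<in>\<U>. measure \<mu> K \<ge> 1 - \<epsilon>}" by force
  qed
  with W(1,2) show ?thesis by (meson interior_of_maximal subsetD)
qed

lemma dense_interior_measure_ge:
  fixes \<U> :: "'a::polish_space set set"
  assumes "openin vietoris \<U>" and dense: "vietoris closure_of \<U> = topspace vietoris"
    and hered: "hereditary_compacts \<U>" and "\<epsilon> > 0"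
  shows "weak_topology closure_of (weak_topology interior_of
           {\<mu> \<in> prob_measures. \<exists>K\<in>\<U>. measure \<mu> K \<ge> 1 - \<epsilon>}) = topspace weak_topology"
  unfolding dense_intersects_open
proof (intro allI impI)
  fix W :: "'a measure set" assume W: "openin weak_topology W \<and> W \<noteq> {}"
  then obtain \<mu> where "\<mu> \<in> W" by blast
  then have \<mu>: "\<mu> \<in> prob_measures" using W topspace_weak_topology openin_subset by blast
  obtain \<Phi> :: "('a \<Rightarrow> real) set" and \<eta> :: real where \<Phi>: "finite \<Phi>" "\<And>f. f \<in> \<Phi> \<Longrightarrow> continuous_on UNIV f"
      "\<And>f. f \<in> \<Phi> \<Longrightarrow> bounded (range f)" and "\<eta> > 0"
    and nbhd: "{\<nu> \<in> prob_measures. \<forall>f\<in>\<Phi>. \<bar>(\<integral>x. f x \<partial>\<nu>) - (\<integral>x. f x \<partial>\<mu>)\<bar> < \<eta>} \<subseteq> W"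
    using weak_topology_nbhd[OF conjunct1[OF W] \<open>\<mu> \<in> W\<close>] by auto
  obtain \<nu> F where \<nu>: "\<nu> \<in> prob_measures" "F \<in> \<U>" "finite F" "measure \<nu> F = 1"
    "\<And>f. f \<in> \<Phi> \<Longrightarrow> \<bar>(\<integral>x. f x \<partial>\<nu>) - (\<integral>x. f x \<partial>\<mu>)\<bar> < \<eta>"
    using dense_hereditary_pushforward_approx[OF dense hered \<mu> \<Phi> \<open>\<eta> > 0\<close>] by blast
  have "\<nu> \<in> W" using nbhd \<nu>(1,5) by blast
  moreover have "\<nu> \<in> weak_topology interior_of {\<mu> \<in> prob_measures. \<exists>K\<in>\<U>. measure \<mu> K \<ge> 1 - \<epsilon>}"
    using \<nu> \<open>\<epsilon> > 0\<close> by (intro measure_gt_imp_interior[OF assms(1) hered _ finite_imp_compact]) auto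
  ultimately show "weak_topology interior_of {\<mu> \<in> prob_measures. \<exists>K\<in>\<U>. measure \<mu> K \<ge> 1 - \<epsilon>} \<inter> W \<noteq> {}"
    by blast
qed

theorem lemma3:
  fixes \<U> :: "'a::polish_space set set" and \<epsilon> :: real
  assumes "\<U> \<subseteq> compacts"
    and "openin vietoris \<U>"
    and "vietoris closure_of \<U> = topspace vietoris"
    and "hereditary_compacts \<U>"
    and "\<epsilon> > 0"
  shows "comeager_in weak_topology
           {\<mu> \<in> prob_measures. \<exists>K\<in>\<U>. measure \<mu> K \<ge> 1 - \<epsilon>}"
proof (rule comeager_in_if_interior_dense)
  show "{\<mu> \<in> prob_measures. \<exists>K\<in>\<U>. measure \<mu> K \<ge> 1 - \<epsilon>} \<subseteq> topspace weak_topology"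
    by (auto simp: topspace_weak_topology)
  show "weak_topology closure_of (weak_topology interior_of
          {\<mu> \<in> prob_measures. \<exists>K\<in>\<U>. measure \<mu> K \<ge> 1 - \<epsilon>}) = topspace weak_topology"
    using dense_interior_measure_ge[OF assms(2-5)] .
qed

end
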